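(* There exists a function $g:(0,\infty)\to(0,\infty)$ such that for every $\varepsilon>0$ and all integers $n\ge 1$ and $k\ge 0$ there exists a tournament tree $T$ with exactly $n$ distinct seed position names and of height at most $\lceil (1+\varepsilon)\log_2 n\rceil+g(\varepsilon^{-1})\cdot k$ that is robust for $(n,k)$.
   Context: A tournament tree is a rooted full binary tree (every internal vertex has exactly two children) whose leaves are labeled with binary strings (seed position names); different leaves may share a name. Height is the maximum number of edges on a root-to-leaf path. A winner function on a player set $N$ is $w:N\times N\to N$ with $w(i,j)\in\{i,j\}$; it exhibits a strongest player $i_w$ if $w(i_w,j)=w(j,i_w)=i_w$ for all $j\in N$. A seeding is a bijection $\sigma$ from $N$ onto the set of seed position names. Conduction of $(N,T,w,\sigma)$: each leaf named $x$ is occupied by $\sigma^{-1}(x)$; at each internal vertex $v$ with children occupied by $i,j$, one of $i,j$ is promoted to $v$, normally $w(i,j)$; the game at $v$ is manipulated if the other one is promoted. The player at the root wins. $T$ is robust for $(n,k)$ if for every set $N$ of $n$ players, every winner function $w$ on $N$ exhibiting a strongest player $i_w$, and every seeding $\sigma$, the player $i_w$ wins $(N,T,w,\sigma)$ whenever every leaf-to-root path of $T$ contains at most $k$ vertices whose game is manipulated. *)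

theory Defs
  imports Complex_Main
begin

datatype ttree = Leaf "bool list" | Node ttree ttree

fun names :: "ttree \<Rightarrow> bool list set" where
  "names (Leaf x) = {x}"
| "names (Node l r) = names l \<union> names r"

fun height :: "ttree \<Rightarrow> nat" where
  "height (Leaf x) = 0"
| "height (Node l r) = Suc (max (height l) (height r))"

text \<open>Vertices are addressed by their path from the root (False = left child, True = right child).
  Conduction: occ gives the player occupying a seed position name (i.e. the inverse of the seeding);
  M is the set of vertices whose game is manipulated.\<close>
fun conduct :: "(nat \<Rightarrow> nat \<Rightarrow> nat) \<Rightarrow> (bool list \<Rightarrow> nat) \<Rightarrow> bool list set \<Rightarrow> bool list \<Rightarrow> ttree \<Rightarrow> nat" where
  "conduct w occ M p (Leaf x) = occ x"
| "conduct w occ M p (Node l r) =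
     (let i = conduct w occ M (p @ [False]) l;
          j = conduct w occ M (p @ [True]) r
      in if p \<in> M then (if w i j = i then j else i) else w i j)"

fun max_manip :: "bool list set \<Rightarrow> bool list \<Rightarrow> ttree \<Rightarrow> nat" where
  "max_manip M p (Leaf x) = 0"
| "max_manip M p (Node l r) =
     (if p \<in> M then 1 else 0) + max (max_manip M (p @ [False]) l) (max_manip M (p @ [True]) r)"

definition winner_function :: "nat set \<Rightarrow> (nat \<Rightarrow> nat \<Rightarrow> nat) \<Rightarrow> bool" where
  "winner_function N w \<longleftrightarrow> (\<forall>i\<in>N. \<forall>j\<in>N. w i j = i \<or> w i j = j)"

definition strongest :: "nat set \<Rightarrow> (nat \<Rightarrow> nat \<Rightarrow> nat) \<Rightarrow> nat \<Rightarrow> bool" where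
  "strongest N w iw \<longleftrightarrow> iw \<in> N \<and> (\<forall>j\<in>N. w iw j = iw \<and> w j iw = iw)"

definition robust :: "nat \<Rightarrow> nat \<Rightarrow> ttree \<Rightarrow> bool" where
  "robust n k T \<longleftrightarrow>
    (\<forall>N :: nat set. \<forall>w iw \<sigma> M.
       finite N \<and> card N = n \<and> winner_function N w \<and> strongest N w iw \<and>
       bij_betw \<sigma> N (names T) \<and> max_manip M [] T \<le> k
       \<longrightarrow> conduct w (inv_into N \<sigma>) M [] T = iw)"

end

theory Submission
  imports Defs
begin

text \<open>Seed names are strings of K blocks of m bits. The tree runs K + 2k rounds on a stack of
  blocks: in each round the left child pops the top block, while the right child is a complete
  tree of depth m whose leaves push every possible block; a leaf reads its name off the bottom
  K blocks. Unmanipulated, the strongest player seeded at x is promoted along the path that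
  pushes the blocks of x one after another. A manipulation either pushes a wrong block or pops
  a correct one, and repairing it takes two extra rounds, so 2k spare rounds absorb k
  manipulations per path. The height is (K + 2k)(m + 1), about (1 + 1/m) log n + 2k(m + 1).\<close>

text \<open>A sufficient condition for the player seeded at x to win whenever it is strongest and
  every path contains at most c manipulated games: if the root game is manipulated, both
  subtrees have budget c - 1 and must be won; otherwise it suffices to win one of them.\<close>
fun robust_seed :: "bool list \<Rightarrow> nat \<Rightarrow> ttree \<Rightarrow> bool" where
  "robust_seed x c (Leaf y) \<longleftrightarrow> y = x"
| "robust_seed x 0 (Node l r) \<longleftrightarrow> robust_seed x 0 l \<or> robust_seed x 0 r"
| "robust_seed x (Suc c) (Node l r) \<longleftrightarrow>
     robust_seed x (Suc c) l \<and> robust_seed x c r \<or> robust_seed x c l \<and> robust_seed x (Suc c) r"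

lemma robust_seed_SucD: "robust_seed x (Suc c) T \<Longrightarrow> robust_seed x c T"
proof (induction T arbitrary: c)
  case (Node l r)
  then show ?case by (cases c) auto
qed simp

lemma robust_seed_in_names: "robust_seed x c T \<Longrightarrow> x \<in> names T"
proof (induction T arbitrary: c)
  case (Node l r)
  then show ?case by (cases c) auto
qed simp

lemma robust_seed_NodeI1:
  "robust_seed x c l \<Longrightarrow> (c > 0 \<Longrightarrow> robust_seed x (c - 1) r) \<Longrightarrow> robust_seed x c (Node l r)"
  by (cases c) auto

lemma robust_seed_NodeI2:
  "robust_seed x c r \<Longrightarrow> (c > 0 \<Longrightarrow> robust_seed x (c - 1) l) \<Longrightarrow> robust_seed x c (Node l r)"
  by (cases c) auto

lemma robust_seed_NodeI:
  "robust_seed x c l \<Longrightarrow> robust_seed x c r \<Longrightarrow> robust_seed x c (Node l r)"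
  by (cases c) (auto dest: robust_seed_SucD)

lemma conduct_in_players:
  assumes "winner_function N w" and "\<forall>y\<in>names T. occ y \<in> N"
  shows "conduct w occ M p T \<in> N"
  using assms(2)
proof (induction T arbitrary: p)
  case (Node l r)
  then have "conduct w occ M (p @ [False]) l \<in> N" "conduct w occ M (p @ [True]) r \<in> N"
    by auto
  moreover from this assms(1)
  have "w (conduct w occ M (p @ [False]) l) (conduct w occ M (p @ [True]) r) \<in> N"
    unfolding winner_function_def by metis
  ultimately show ?case by (simp add: Let_def)
qed simp

lemma conduct_eq_strongest:
  assumes w: "winner_function N w" and strongest: "strongest N w iw" and "occ x = iw"
  shows "\<forall>y\<in>names T. occ y \<in> N \<Longrightarrow> robust_seed x c T \<Longrightarrow> max_manip M p T \<le> c \<Longrightarrow>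
    conduct w occ M p T = iw"
proof (induction T arbitrary: p c)
  case (Leaf y)
  with \<open>occ x = iw\<close> show ?case by simp
next
  case (Node l r)
  define i where "i = conduct w occ M (p @ [False]) l"
  define j where "j = conduct w occ M (p @ [True]) r"
  have "i \<in> N" "j \<in> N"
    using Node.prems(1) conduct_in_players[OF w] unfolding i_def j_def by auto
  then have promote: "w i j = iw" if "i = iw \<or> j = iw"
    using that strongest unfolding strongest_def by auto
  have node: "conduct w occ M p (Node l r) = (if p \<in> M then (if w i j = i then j else i) else w i j)"
    by (simp add: i_def j_def Let_def)
  show ?case
  proof (cases "p \<in> M")
    case True
    with Node.prems(3) obtain c' where c': "c = Suc c'"
      and "max_manip M (p @ [False]) l \<le> c'" "max_manip M (p @ [True]) r \<le> c'"
      by (cases c) auto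
    moreover have "robust_seed x c' l" "robust_seed x c' r"
      using Node.prems(2) unfolding c' by (auto dest: robust_seed_SucD)
    ultimately have "i = iw" "j = iw"
      using Node.IH Node.prems(1) unfolding i_def j_def by auto
    with node True show ?thesis by (simp del: conduct.simps)
  next
    case False
    with Node.prems(3) have "max_manip M (p @ [False]) l \<le> c" "max_manip M (p @ [True]) r \<le> c"
      by auto
    moreover have "robust_seed x c l \<or> robust_seed x c r"
      using Node.prems(2) by (cases c) auto
    ultimately have "i = iw \<or> j = iw"
      using Node.IH Node.prems(1) unfolding i_def j_def by auto
    with node False promote show ?thesis by (simp del: conduct.simps)
  qed
qed

lemma robust_if_robust_seeds:
  assumes "\<And>x. x \<in> names T \<Longrightarrow> robust_seed x k T"
  shows "robust n k T"
  unfolding robust_def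
proof (intro allI impI, elim conjE)
  fix N w iw \<sigma> M
  assume w: "winner_function N w" and strongest: "strongest N w iw"
    and \<sigma>: "bij_betw \<sigma> N (names T)" and "max_manip M [] T \<le> k"
  have "iw \<in> N" using strongest unfolding strongest_def by simp
  then have "\<sigma> iw \<in> names T" "inv_into N \<sigma> (\<sigma> iw) = iw"
    using \<sigma> by (auto simp: bij_betw_def)
  moreover have "\<forall>y\<in>names T. inv_into N \<sigma> y \<in> N"
    using \<sigma> by (auto simp: bij_betw_def intro: inv_into_into)
  ultimately show "conduct w (inv_into N \<sigma>) M [] T = iw"
    using conduct_eq_strongest[OF w strongest] assms \<open>max_manip M [] T \<le> k\<close> by blast
qed

lemma names_eq_if_robust_seeds:
  "names T \<subseteq> S \<Longrightarrow> (\<And>x. x \<in> S \<Longrightarrow> robust_seed x c T) \<Longrightarrow> names T = S"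
  using robust_seed_in_names by blast

fun complete_tree :: "nat \<Rightarrow> (bool list \<Rightarrow> ttree) \<Rightarrow> ttree" where
  "complete_tree 0 F = F []"
| "complete_tree (Suc m) F =
     Node (complete_tree m (\<lambda>v. F (False # v))) (complete_tree m (\<lambda>v. F (True # v)))"

lemma names_complete_tree:
  "(\<And>v. length v = m \<Longrightarrow> names (F v) \<subseteq> A) \<Longrightarrow> names (complete_tree m F) \<subseteq> A"
  by (induction m arbitrary: F) auto

lemma height_complete_tree:
  "(\<And>v. length v = m \<Longrightarrow> height (F v) \<le> h) \<Longrightarrow> height (complete_tree m F) \<le> m + h"
  by (induction m arbitrary: F) auto

lemma robust_seed_complete_treeI:
  "(\<And>v. length v = m \<Longrightarrow> robust_seed x c (F v)) \<Longrightarrow> robust_seed x c (complete_tree m F)"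
  by (induction m arbitrary: F) (auto intro: robust_seed_NodeI)

lemma robust_seed_complete_tree_path:
  "length u = m \<Longrightarrow> robust_seed x c (F u) \<Longrightarrow>
    (c > 0 \<Longrightarrow> \<forall>v. length v = m \<longrightarrow> robust_seed x (c - 1) (F v)) \<Longrightarrow>
    robust_seed x c (complete_tree m F)"
proof (induction m arbitrary: F u)
  case (Suc m)
  then obtain b u' where u: "u = b # u'" "length u' = m" by (cases u) auto
  have "robust_seed x c (complete_tree m (\<lambda>v. F (b # v)))"
    using Suc.IH[of u' "\<lambda>v. F (b # v)"] Suc.prems u by auto
  moreover have "robust_seed x (c - 1) (complete_tree m (\<lambda>v. F ((\<not> b) # v)))" if "c > 0"
    using Suc.prems that by (intro robust_seed_complete_treeI) auto
  ultimately show ?case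
    by (cases b) (auto intro: robust_seed_NodeI1 robust_seed_NodeI2)
qed simp

definition decode_stack :: "nat \<Rightarrow> bool list set \<Rightarrow> bool list \<Rightarrow> bool list list \<Rightarrow> bool list" where
  "decode_stack K S s0 st = (let s = concat (take K st) in if s \<in> S then s else s0)"

text \<open>The stack is a list with its top at the end; r is the number of remaining rounds.\<close>
fun stack_tree ::
  "nat \<Rightarrow> nat \<Rightarrow> bool list set \<Rightarrow> bool list \<Rightarrow> nat \<Rightarrow> bool list list \<Rightarrow> ttree" where
  "stack_tree m K S s0 0 st = Leaf (decode_stack K S s0 st)"
| "stack_tree m K S s0 (Suc r) st =
     Node (stack_tree m K S s0 r (butlast st))
          (complete_tree m (\<lambda>v. stack_tree m K S s0 r (st @ [v])))"

lemma names_stack_tree: "s0 \<in> S \<Longrightarrow> names (stack_tree m K S s0 r st) \<subseteq> S"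
proof (induction r arbitrary: st)
  case (Suc r)
  then have "names (complete_tree m (\<lambda>v. stack_tree m K S s0 r (st @ [v]))) \<subseteq> S"
    by (intro names_complete_tree)
  with Suc show ?case by simp
qed (simp add: decode_stack_def Let_def)

lemma height_stack_tree: "height (stack_tree m K S s0 r st) \<le> r * (m + 1)"
proof (induction r arbitrary: st)
  case (Suc r)
  have "height (complete_tree m (\<lambda>v. stack_tree m K S s0 r (st @ [v]))) \<le> m + r * (m + 1)"
    using Suc.IH by (rule height_complete_tree)
  with Suc.IH[of "butlast st"] show ?case by simp
qed simp

text \<open>Invariant: the bottom g blocks of the stack are the correct blocks b 0, ..., b (g - 1) of x,
  and the r remaining rounds suffice to pop the wrong blocks above them and push the K - g
  missing ones, with two more rounds for each of the c manipulations still possible.\<close>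
lemma robust_seed_stack_tree:
  assumes "x \<in> S" and block_length: "\<And>i. length (b i) = m"
    and spell: "concat (map b [0..<K]) = x"
  shows "g \<le> length st \<Longrightarrow> \<forall>i<g. st ! i = b i \<Longrightarrow> K + 2 * c + length st \<le> r + 2 * g \<Longrightarrow>
    robust_seed x c (stack_tree m K S s0 r st)"
proof (induction r arbitrary: st c g)
  case 0
  then have "take K st = map b [0..<K]"
    by (intro nth_equalityI) auto
  with spell \<open>x \<in> S\<close> show ?case by (simp add: decode_stack_def)
next
  case (Suc r)
  show ?case
  proof (cases "g = length st")
    case True
    have "robust_seed x c (complete_tree m (\<lambda>v. stack_tree m K S s0 r (st @ [v])))"
    proof (rule robust_seed_complete_tree_path)
      show "robust_seed x c (stack_tree m K S s0 r (st @ [b (length st)]))"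
        using Suc True by (intro Suc.IH[where g = "Suc g"]) (auto simp: nth_append less_Suc_eq)
      show "\<forall>v. length v = m \<longrightarrow> robust_seed x (c - 1) (stack_tree m K S s0 r (st @ [v]))"
        if "c > 0"
        using Suc True that by (intro allI impI Suc.IH[where g = g]) (auto simp: nth_append)
    qed (rule block_length)
    moreover have "robust_seed x (c - 1) (stack_tree m K S s0 r (butlast st))" if "c > 0"
      using Suc True that by (intro Suc.IH[where g = "g - 1"]) (auto simp: nth_butlast)
    ultimately show ?thesis by (auto intro: robust_seed_NodeI2)
  next
    case False
    have "robust_seed x c (stack_tree m K S s0 r (butlast st))"
      using Suc False by (intro Suc.IH[where g = g]) (auto simp: nth_butlast)
    moreover have "robust_seed x (c - 1) (complete_tree m (\<lambda>v. stack_tree m K S s0 r (st @ [v])))"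
      if "c > 0"
      using Suc that by (intro robust_seed_complete_treeI Suc.IH[where g = g]) (auto simp: nth_append)
    ultimately show ?thesis by (auto intro: robust_seed_NodeI1)
  qed
qed

lemma exists_blocks:
  assumes "length x = K * m"
  shows "\<exists>b. (\<forall>i. length (b i) = m) \<and> concat (map b [0..<K]) = x"
  using assms
proof (induction K arbitrary: x)
  case 0
  then show ?case by (intro exI[of _ "\<lambda>_. replicate m undefined"]) simp
next
  case (Suc K)
  have "length (drop m x) = K * m"
    using Suc.prems by simp
  then obtain b where b: "\<forall>i. length (b i) = m" "concat (map b [0..<K]) = drop m x"
    using Suc.IH by blast
  have "map (case_nat (take m x) b) [0..<Suc K] = take m x # map b [0..<K]"
    by (simp add: upt_conv_Cons map_Suc_upt[symmetric] comp_def del: upt_Suc)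
  moreover have "length (take m x) = m"
    using Suc.prems by simp
  ultimately show ?case
    using b by (intro exI[of _ "case_nat (take m x) b"]) (auto split: nat.split)
qed

lemma obtain_seed_names:
  assumes "n \<le> 2 ^ l"
  obtains S :: "bool list set" where "S \<subseteq> {v. length v = l}" "card S = n"
proof -
  have "card {v :: bool list. length v = l} = 2 ^ l"
    using card_lists_length_eq[of "UNIV :: bool set" l] by simp
  with assms obtain S where "S \<subseteq> {v :: bool list. length v = l}" "card S = n"
    by (metis obtain_subset_with_card_n)
  then show ?thesis by (rule that)
qed

lemma exists_robust_tree_unmanipulated:
  assumes "n \<ge> 1" and "n \<le> 2 ^ L"
  shows "\<exists>T. card (names T) = n \<and> height T \<le> L \<and> robust n 0 T"
proof -
  obtain S :: "bool list set" where S: "S \<subseteq> {v. length v = L}" "card S = n"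
    using obtain_seed_names[OF assms(2)] by blast
  with assms(1) have "S \<noteq> {}" by auto
  then obtain s0 where "s0 \<in> S" by blast
  define T where "T = complete_tree L (\<lambda>v. Leaf (if v \<in> S then v else s0))"
  have robust_seeds: "robust_seed x 0 T" if "x \<in> S" for x
    unfolding T_def using that S(1) by (intro robust_seed_complete_tree_path[of x]) auto
  have "names T \<subseteq> S"
    unfolding T_def using \<open>s0 \<in> S\<close> by (intro names_complete_tree) auto
  then have "names T = S"
    using robust_seeds by (rule names_eq_if_robust_seeds)
  moreover have "height T \<le> L"
    using height_complete_tree[of L _ 0] unfolding T_def by simp
  ultimately show ?thesis
    using S(2) robust_seeds robust_if_robust_seeds by blast
qed

lemma exists_robust_tree:
  assumes "n \<ge> 1" and "n \<le> 2 ^ (K * m)"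
  shows "\<exists>T. card (names T) = n \<and> height T \<le> (K + 2 * k) * (m + 1) \<and> robust n k T"
proof -
  obtain S :: "bool list set" where S: "S \<subseteq> {v. length v = K * m}" "card S = n"
    using obtain_seed_names[OF assms(2)] by blast
  with assms(1) have "S \<noteq> {}" by auto
  then obtain s0 where "s0 \<in> S" by blast
  define T where "T = stack_tree m K S s0 (K + 2 * k) []"
  have robust_seeds: "robust_seed x k T" if x: "x \<in> S" for x
  proof -
    obtain b where "\<forall>i. length (b i) = m" "concat (map b [0..<K]) = x"
      using exists_blocks[of x K m] x S(1) by auto
    with x show ?thesis
      unfolding T_def by (intro robust_seed_stack_tree[where g = 0]) auto
  qed
  have "names T \<subseteq> S"
    unfolding T_def using \<open>s0 \<in> S\<close> by (rule names_stack_tree)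
  then have "names T = S"
    using robust_seeds by (rule names_eq_if_robust_seeds)
  moreover have "height T \<le> (K + 2 * k) * (m + 1)"
    unfolding T_def by (rule height_stack_tree)
  ultimately show ?thesis
    using S(2) robust_seeds robust_if_robust_seeds by blast
qed

lemma le_two_power_ceiling_log:
  assumes "n \<ge> 1"
  shows "n \<le> 2 ^ nat \<lceil>log 2 (real n)\<rceil>"
proof -
  have "real n = 2 powr log 2 (real n)"
    using assms by simp
  also have "\<dots> \<le> 2 powr real (nat \<lceil>log 2 (real n)\<rceil>)"
    by (intro powr_mono) linarith+
  finally have "real n \<le> 2 powr real (nat \<lceil>log 2 (real n)\<rceil>)" .
  then have "real n \<le> real (2 ^ nat \<lceil>log 2 (real n)\<rceil>)"
    by (simp add: powr_realpow)
  then show ?thesis by linarith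
qed

lemma stack_tree_height_estimate:
  fixes \<epsilon> lg :: real and k :: nat
  assumes "\<epsilon> > 0" and "lg \<ge> 0" and "k \<ge> 1"
  defines "m \<equiv> nat \<lceil>1 / \<epsilon>\<rceil>" and "L \<equiv> nat \<lceil>lg\<rceil>"
  shows "real ((L div m + 1 + 2 * k) * (m + 1))
    \<le> real_of_int \<lceil>(1 + \<epsilon>) * lg\<rceil> + 5 * (1 / \<epsilon> + 2) * real k"
proof -
  define K where "K = L div m + 1"
  have "\<lceil>1 / \<epsilon>\<rceil> > 0"
    using \<open>\<epsilon> > 0\<close> by simp
  then have m: "1 / \<epsilon> \<le> real m" "real m < 1 / \<epsilon> + 1" "m \<ge> 1"
    unfolding m_def by linarith+
  then have "1 / real m \<le> \<epsilon>"
    using \<open>\<epsilon> > 0\<close> by (simp add: divide_le_eq mult.commute pos_divide_le_eq)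
  have L: "real L < lg + 1"
    using \<open>lg \<ge> 0\<close> unfolding L_def by linarith
  have "real (L div m) * real m \<le> real L"
    by (metis div_times_less_eq_dividend of_nat_le_iff of_nat_mult)
  then have Km: "real K * real m \<le> real L + real m" and K: "real K \<le> real L / real m + 1"
    using m(3) unfolding K_def by (simp_all add: algebra_simps le_divide_eq)
  have "real L / real m \<le> (lg + 1) / real m"
    using L m(3) by (simp add: divide_right_mono)
  also have "\<dots> = lg * (1 / real m) + 1 / real m"
    by (simp add: add_divide_distrib)
  also have "\<dots> \<le> lg * \<epsilon> + 1"
    using \<open>1 / real m \<le> \<epsilon>\<close> \<open>lg \<ge> 0\<close> m(3) by (intro add_mono mult_left_mono) auto
  finally have "real K * (real m + 1) \<le> (1 + \<epsilon>) * lg + 3 * (real m + 1)"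
    using Km K L by (simp add: algebra_simps)
  moreover have "3 * (real m + 1) \<le> 3 * real k * (real m + 1)"
    using \<open>k \<ge> 1\<close> by (intro mult_right_mono) auto
  ultimately have K_height: "real K * (real m + 1) \<le> (1 + \<epsilon>) * lg + 3 * real k * (real m + 1)"
    by linarith
  have "real ((K + 2 * k) * (m + 1)) = real K * (real m + 1) + 2 * real k * (real m + 1)"
    by (simp add: algebra_simps)
  also have "\<dots> \<le> (1 + \<epsilon>) * lg + 5 * real k * (real m + 1)"
    using K_height by simp
  also have "\<dots> \<le> real_of_int \<lceil>(1 + \<epsilon>) * lg\<rceil> + 5 * (1 / \<epsilon> + 2) * real k"
  proof (rule add_mono)
    show "(1 + \<epsilon>) * lg \<le> real_of_int \<lceil>(1 + \<epsilon>) * lg\<rceil>"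
      by (rule le_of_int_ceiling)
    have "5 * real k * (real m + 1) = 5 * (real m + 1) * real k"
      by simp
    also have "\<dots> \<le> 5 * (1 / \<epsilon> + 2) * real k"
      using m(2) by (intro mult_right_mono) auto
    finally show "5 * real k * (real m + 1) \<le> 5 * (1 / \<epsilon> + 2) * real k" .
  qed
  finally show ?thesis
    unfolding K_def .
qed

lemma exists_robust_tree_log_height_unmanipulated:
  assumes "\<epsilon> > 0" and "n \<ge> 1"
  shows "\<exists>T. card (names T) = n \<and>
    real (height T) \<le> real_of_int \<lceil>(1 + \<epsilon>) * log 2 (real n)\<rceil> \<and> robust n 0 T"
proof -
  define lg where "lg = log 2 (real n)"
  obtain T where T: "card (names T) = n" "height T \<le> nat \<lceil>lg\<rceil>" "robust n 0 T"
    using exists_robust_tree_unmanipulated[OF \<open>n \<ge> 1\<close> le_two_power_ceiling_log[OF \<open>n \<ge> 1\<close>]]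
    unfolding lg_def by blast
  have "lg \<ge> 0"
    unfolding lg_def using \<open>n \<ge> 1\<close> by simp
  with \<open>\<epsilon> > 0\<close> have "lg \<le> (1 + \<epsilon>) * lg"
    by (simp add: algebra_simps)
  with \<open>lg \<ge> 0\<close> have "real (nat \<lceil>lg\<rceil>) \<le> real_of_int \<lceil>(1 + \<epsilon>) * lg\<rceil>"
    by (simp add: ceiling_mono)
  with T show ?thesis
    unfolding lg_def by (intro exI[of _ T]) auto
qed

lemma exists_robust_tree_log_height:
  assumes "\<epsilon> > 0" and "n \<ge> 1" and "k \<ge> 1"
  shows "\<exists>T. card (names T) = n \<and>
    real (height T) \<le> real_of_int \<lceil>(1 + \<epsilon>) * log 2 (real n)\<rceil> + 5 * (1 / \<epsilon> + 2) * real k \<and>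
    robust n k T"
proof -
  define L where "L = nat \<lceil>log 2 (real n)\<rceil>"
  define m where "m = nat \<lceil>1 / \<epsilon>\<rceil>"
  have "\<lceil>1 / \<epsilon>\<rceil> > 0"
    using \<open>\<epsilon> > 0\<close> by simp
  then have "m > 0"
    unfolding m_def by simp
  then have "L \<le> (L div m + 1) * m"
    using dividend_less_div_times[of m L] by simp
  have "n \<le> 2 ^ L"
    unfolding L_def using \<open>n \<ge> 1\<close> by (rule le_two_power_ceiling_log)
  also have "\<dots> \<le> 2 ^ ((L div m + 1) * m)"
    using \<open>L \<le> (L div m + 1) * m\<close> by (rule power_increasing) simp
  finally obtain T where "card (names T) = n" "height T \<le> (L div m + 1 + 2 * k) * (m + 1)"
    "robust n k T"
    using exists_robust_tree[OF \<open>n \<ge> 1\<close>] by blast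
  moreover have "real ((L div m + 1 + 2 * k) * (m + 1))
      \<le> real_of_int \<lceil>(1 + \<epsilon>) * log 2 (real n)\<rceil> + 5 * (1 / \<epsilon> + 2) * real k"
    unfolding L_def m_def using assms by (intro stack_tree_height_estimate) auto
  ultimately show ?thesis
    by (intro exI[of _ T]) (auto simp del: of_nat_mult)
qed

theorem corollary14:
  shows "\<exists>g :: real \<Rightarrow> real. (\<forall>x>0. g x > 0) \<and>
    (\<forall>\<epsilon>::real. \<epsilon> > 0 \<longrightarrow> (\<forall>n::nat. n \<ge> 1 \<longrightarrow> (\<forall>k::nat.
      \<exists>T. card (names T) = n \<and>
          real (height T) \<le> real_of_int \<lceil>(1 + \<epsilon>) * log 2 (real n)\<rceil> + g (1 / \<epsilon>) * real k \<and>
          robust n k T)))"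
proof (intro exI[of _ "\<lambda>y. 5 * (y + 2)"] conjI allI impI)
  fix y :: real
  assume "y > 0"
  then show "5 * (y + 2) > 0" by simp
next
  fix \<epsilon> :: real and n k :: nat
  assume "\<epsilon> > 0" and "n \<ge> 1"
  \<comment> \<open>For k = 0 there is no k-term to absorb the O(m) extra levels of the stack tree.\<close>
  show "\<exists>T. card (names T) = n \<and>
      real (height T) \<le> real_of_int \<lceil>(1 + \<epsilon>) * log 2 (real n)\<rceil> + 5 * (1 / \<epsilon> + 2) * real k \<and>
      robust n k T"
  proof (cases "k = 0")
    case True
    with exists_robust_tree_log_height_unmanipulated[OF \<open>\<epsilon> > 0\<close> \<open>n \<ge> 1\<close>] show ?thesis
      by simp
  next
    case False
    with exists_robust_tree_log_height[OF \<open>\<epsilon> > 0\<close> \<open>n \<ge> 1\<close>] show ?thesis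
      by simp
  qed
qed

end
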